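(* Let $s\ge1$, $M=(p^s-1)/2$, $1\le l\le g$ and $\delta_l=(2g+1)M-lp^s$. Then, as rational functions of $z$, $$(-1)^{\delta_l}\,(z_{n-2l}-z_n)^l\;\tilde I^{[lp^s-1]}_{p^s}(z)=x_1^{M}\,Q^{l,s}(x_2,\dots,x_{n-1}),$$ where $x_1,\dots,x_{n-1}$ are the rational functions of $z$ defined below. Moreover, the constant term of $Q^{l,s}$ equals $\binom{M}{l}\big(0,\dots,0,\tfrac{l}{M},1,\dots,1\big)$, with $0$ repeated $2g-2l$ times, $l/M$ in position $2g-2l+1$, and $1$ repeated $2l$ times.
   Context: Let $p$ be an odd prime, $g\ge1$, $n=2g+1$, with $p>n$; $z=(z_1,\dots,z_n)$. Put $M=(p^s-1)/2$, $\Phi_{p^s}(x,z)=\prod_{i=1}^n(x-z_i)^{M}$; substitute $x=v+z_n$ and expand $\Big(\frac{\Phi_{p^s}(v+z_n,z)}{v+z_n-z_1},\dots,\frac{\Phi_{p^s}(v+z_n,z)}{v+z_n-z_{n-1}},\frac{\Phi_{p^s}(v+z_n,z)}{v}\Big)=\sum_i\tilde P^i_{p^s}(z)v^i$ with $\tilde P^i_{p^s}(z)\in\mathbb Z[z]^n$; set $\tilde I^{[lp^s-1]}_{p^s}(z)=\tilde P^{lp^s-1}_{p^s}(z)$. Fix $1\le l\le g$. Define $x_1=\prod_{i=1}^{n-2l}(z_i-z_n)$; $x_i=\frac{z_{n-2l}-z_n}{z_{i-1}-z_n}$ for $2\le i\le n-2l$; $x_i=\frac{z_i-z_n}{z_{n-2l}-z_n}$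 for $n-2l+1\le i\le n-1$. Define the polynomial vector $Q^{l,s}=(Q^{l,s}_1,\dots,Q^{l,s}_n)$ in $x_2,\dots,x_{n-1}$ as follows. Write $X(a)=\prod_{i=2}^{n-2l}x_i^{a_{i-1}}\prod_{i=n-2l+1}^{n-1}x_i^{a_i}$ for $a=(a_1,\dots,a_{n-1})$; all sums below are over $a\in\mathbb Z^{n-1}$ with $0\le a_i\le M$. For $1\le j\le n-2l-1$: $Q^{l,s}_j=x_{j+1}\sum\binom{M-1}{a_j}\prod_{i\ne j}\binom{M}{a_i}X(a)$, summed over $a$ with $a_1+\dots+a_{n-2l}=a_{n-2l+1}+\dots+a_{n-1}+l-1$. For $j=n-2l$: $Q^{l,s}_j=\sum\binom{M-1}{a_j}\prod_{i\ne j}\binom{M}{a_i}X(a)$, same summation condition (with $l-1$). For $n-2l<j\le n-1$: $Q^{l,s}_j=\sum\binom{M-1}{a_j}\prod_{i\ne j}\binom{M}{a_i}X(a)$, summed over $a$ with $a_1+\dots+a_{n-2l}=a_{n-2l+1}+\dots+a_{n-1}+l$. $Q^{l,s}_n=\sum\prod_{i=1}^{n-1}\binom{M}{a_i}X(a)$, summed over $a$ with $a_1+\dots+a_{n-2l}=a_{n-2l+1}+\dots+a_{n-1}+l$. (Products $\prod_{i\ne j}$ are over $i\in\{1,\dots,n-1\}\setminus\{j\}$.) *)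

theory Defs
  imports "HOL-Computational_Algebra.Polynomial" "HOL-Library.FuncSet"
begin

(* Parameters: p, s, g, l.  n = 2g+1, M = (p^s-1)/2.
   Vectors z = (z_1..z_n) are functions nat => real indexed by 1..n. *)

definition nn :: "nat \<Rightarrow> nat" where "nn g = 2*g+1"

definition MM :: "nat \<Rightarrow> nat \<Rightarrow> nat" where "MM p s = (p^s - 1) div 2"

(* Phi_{p^s}(v + z_n, z) as a polynomial in v *)
definition Phi_shift :: "nat \<Rightarrow> nat \<Rightarrow> nat \<Rightarrow> (nat \<Rightarrow> real) \<Rightarrow> real poly" where
  "Phi_shift p s g z = (\<Prod>i\<in>{1..nn g}. [:z (nn g) - z i, 1:] ^ MM p s)"

(* j-th component of tilde I^{[l p^s - 1]}_{p^s}(z): coefficient of v^(l p^s - 1) in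
   Phi_{p^s}(v+z_n,z) / (v + z_n - z_j)  (for j = n the divisor is v) *)
definition Itilde :: "nat \<Rightarrow> nat \<Rightarrow> nat \<Rightarrow> nat \<Rightarrow> (nat \<Rightarrow> real) \<Rightarrow> nat \<Rightarrow> real" where
  "Itilde p s g l z j =
     coeff (Phi_shift p s g z div [:z (nn g) - z j, 1:]) (l * p^s - 1)"

definition x1 :: "nat \<Rightarrow> nat \<Rightarrow> (nat \<Rightarrow> real) \<Rightarrow> real" where
  "x1 g l z = (\<Prod>i\<in>{1..nn g - 2*l}. (z i - z (nn g)))"

definition xs :: "nat \<Rightarrow> nat \<Rightarrow> (nat \<Rightarrow> real) \<Rightarrow> nat \<Rightarrow> real" where
  "xs g l z i =
     (if 2 \<le> i \<and> i \<le> nn g - 2*l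
      then (z (nn g - 2*l) - z (nn g)) / (z (i - 1) - z (nn g))
      else (z i - z (nn g)) / (z (nn g - 2*l) - z (nn g)))"

definition Xmon :: "nat \<Rightarrow> nat \<Rightarrow> (nat \<Rightarrow> nat) \<Rightarrow> (nat \<Rightarrow> real) \<Rightarrow> real" where
  "Xmon g l a x = (\<Prod>i\<in>{2..nn g - 2*l}. x i ^ a (i - 1)) *
                  (\<Prod>i\<in>{nn g - 2*l + 1..nn g - 1}. x i ^ a i)"

definition Aset :: "nat \<Rightarrow> nat \<Rightarrow> nat \<Rightarrow> (nat \<Rightarrow> nat) set" where
  "Aset p s g = PiE {1..nn g - 1} (\<lambda>_. {0..MM p s})"

definition sumcond :: "nat \<Rightarrow> nat \<Rightarrow> nat \<Rightarrow> (nat \<Rightarrow> nat) \<Rightarrow> bool" where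
  "sumcond g l c a \<longleftrightarrow>
     (\<Sum>i\<in>{1..nn g - 2*l}. a i) = (\<Sum>i\<in>{nn g - 2*l + 1..nn g - 1}. a i) + c"

definition wt :: "nat \<Rightarrow> nat \<Rightarrow> nat \<Rightarrow> nat \<Rightarrow> (nat \<Rightarrow> nat) \<Rightarrow> real" where
  "wt p s g j a = real ((MM p s - 1) choose a j) *
                  (\<Prod>i\<in>{1..nn g - 1} - {j}. real (MM p s choose a i))"

definition wtn :: "nat \<Rightarrow> nat \<Rightarrow> nat \<Rightarrow> (nat \<Rightarrow> nat) \<Rightarrow> real" where
  "wtn p s g a = (\<Prod>i\<in>{1..nn g - 1}. real (MM p s choose a i))"

definition Q :: "nat \<Rightarrow> nat \<Rightarrow> nat \<Rightarrow> nat \<Rightarrow> nat \<Rightarrow> (nat \<Rightarrow> real) \<Rightarrow> real" where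
  "Q p s g l j x =
    (if j \<le> nn g - 2*l - 1 then
       x (j + 1) * (\<Sum>a\<in>{a\<in>Aset p s g. sumcond g l (l - 1) a}. wt p s g j a * Xmon g l a x)
     else if j = nn g - 2*l then
       (\<Sum>a\<in>{a\<in>Aset p s g. sumcond g l (l - 1) a}. wt p s g j a * Xmon g l a x)
     else if j \<le> nn g - 1 then
       (\<Sum>a\<in>{a\<in>Aset p s g. sumcond g l l a}. wt p s g j a * Xmon g l a x)
     else
       (\<Sum>a\<in>{a\<in>Aset p s g. sumcond g l l a}. wtn p s g a * Xmon g l a x))"

definition cvec :: "nat \<Rightarrow> nat \<Rightarrow> nat \<Rightarrow> nat \<Rightarrow> nat \<Rightarrow> real" where
  "cvec p s g l j =
     (if j \<le> 2*g - 2*l then 0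
      else if j = 2*g - 2*l + 1 then real l / real (MM p s)
      else 1)"

end

theory Submission
  imports Defs
begin

(* With w_i = z_i - z_n and m = n - 2l we have Phi_{p^s}(v + z_n, z) = prod_i (v - w_i)^M
   and w_n = 0. Dividing by v - w_j lowers the j-th exponent by one, so the j-th component
   of Itilde is (-1)^delta times a sum, over exponent vectors b with |b| = delta = mM - l,
   of prod_i binom(e_i, b_i) w_i^b_i; delta is exactly the exponent delta_l of the sign.
   On the other side, multiplying X(a) by x_1^M clears all denominators and gives
   w_m^c prod_i w_i^a'_i, where a' replaces a_i by M - a_i for i <= m. This involution turns
   the summation condition of Q into |a'| = mM - c and, by the symmetry of binomial
   coefficients, the weights of Q into those of the expansion. At x = 0 only the vector
   concentrated at position m survives, because 0^0 = 1. *)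

lemma linear_poly_power_eq_sum_monom:
  fixes c :: "'a::comm_ring_1"
  shows "[:c, 1:] ^ e = (\<Sum>b\<in>{0..e}. monom (of_nat (e choose b) * c ^ b) (e - b))"
proof -
  have "[:c, 1:] = [:c:] + monom 1 1" by (simp add: monom_Suc)
  hence "[:c, 1:] ^ e = (\<Sum>k\<le>e. of_nat (e choose k) * [:c:] ^ k * monom 1 1 ^ (e - k))"
    by (simp add: binomial_ring)
  also have "\<dots> = (\<Sum>b\<in>{0..e}. monom (of_nat (e choose b) * c ^ b) (e - b))"
    by (simp only: atLeast0AtMost, intro sum.cong)
      (auto simp: monom_power of_nat_poly poly_const_pow smult_monom)
  finally show ?thesis .
qed

lemma prod_monom:
  fixes f :: "'i \<Rightarrow> 'a::comm_semiring_1"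
  shows "finite I \<Longrightarrow> (\<Prod>i\<in>I. monom (f i) (d i)) = monom (\<Prod>i\<in>I. f i) (\<Sum>i\<in>I. d i)"
  by (induction I rule: finite_induct) (auto simp: mult_monom)

lemma coeff_prod_linear_powers:
  fixes c :: "'i \<Rightarrow> 'a::comm_ring_1"
  assumes "finite I"
  shows "coeff (\<Prod>i\<in>I. [:c i, 1:] ^ e i) k =
    (\<Sum>b\<in>{b\<in>PiE I (\<lambda>i. {0..e i}). (\<Sum>i\<in>I. e i - b i) = k}.
        \<Prod>i\<in>I. of_nat (e i choose b i) * c i ^ b i)"
proof -
  have "(\<Prod>i\<in>I. [:c i, 1:] ^ e i)
      = (\<Prod>i\<in>I. \<Sum>b\<in>{0..e i}. monom (of_nat (e i choose b) * c i ^ b) (e i - b))"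
    by (simp add: linear_poly_power_eq_sum_monom)
  also have "\<dots> = (\<Sum>b\<in>PiE I (\<lambda>i. {0..e i}).
      \<Prod>i\<in>I. monom (of_nat (e i choose b i) * c i ^ b i) (e i - b i))"
    using assms by (simp add: prod_sum_PiE)
  also have "\<dots> = (\<Sum>b\<in>PiE I (\<lambda>i. {0..e i}).
      monom (\<Prod>i\<in>I. of_nat (e i choose b i) * c i ^ b i) (\<Sum>i\<in>I. e i - b i))"
    using assms by (simp add: prod_monom)
  finally show ?thesis
    using assms by (simp add: coeff_sum sum.inter_filter[symmetric] finite_PiE)
qed

lemma prod_zero_power:
  assumes "finite A"
  shows "(\<Prod>i\<in>A. (0::'a::comm_semiring_1) ^ f i) = (if \<forall>i\<in>A. f i = 0 then 1 else 0)"
proof (cases "\<forall>i\<in>A. f i = 0")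
  case False
  then obtain i where "i \<in> A" "f i \<noteq> 0" by blast
  with assms show ?thesis by (auto intro!: prod_zero bexI[of _ i] simp: power_0_left)
qed simp

lemma real_binomial_absorption:
  assumes "1 \<le> k" "1 \<le> m"
  shows "real ((m - 1) choose (k - 1)) = real (m choose k) * (real k / real m)"
proof -
  have "real k * real (m choose k) = real m * real ((m - 1) choose (k - 1))"
    using binomial_absorption[of "k - 1" m] assms(1) by (simp flip: of_nat_mult)
  thus ?thesis using assms(2) by (simp add: field_simps)
qed

lemma sum_fun_upd_Suc:
  assumes "finite A" "j \<in> A"
  shows "sum (f(j := Suc (f j))) A = Suc (sum f A)"
proof -
  have "sum (f(j := Suc (f j))) (A - {j}) = sum f (A - {j})" by (intro sum.cong) auto
  thus ?thesis using assms by (simp add: sum.remove)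
qed

lemma prod_atLeast1_atMost_last:
  fixes m :: nat
  assumes "1 \<le> m"
  shows "(\<Prod>i\<in>{1..m}. f i) = (\<Prod>i\<in>{1..m - 1}. f i) * (f m :: 'a::comm_monoid_mult)"
proof -
  have "{1..m} = insert m {1..m - 1}" using assms by auto
  thus ?thesis using assms by (simp add: mult.commute)
qed

lemma sum_atLeast1_atMost_last:
  fixes m :: nat
  assumes "1 \<le> m"
  shows "(\<Sum>i\<in>{1..m}. f i) = (\<Sum>i\<in>{1..m - 1}. f i) + (f m :: 'a::comm_monoid_add)"
proof -
  have "{1..m} = insert m {1..m - 1}" using assms by auto
  thus ?thesis using assms by (simp add: add.commute)
qed

lemma prod_atLeast1_atMost_split:
  fixes m k :: nat
  assumes "m \<le> k"
  shows "(\<Prod>i\<in>{1..k}. f i) = (\<Prod>i\<in>{1..m}. f i) * (\<Prod>i\<in>{m + 1..k}. f i :: 'a::comm_monoid_mult)"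
proof -
  have "{1..k} = {1..m} \<union> {m + 1..k}" using assms by auto
  thus ?thesis by (simp add: prod.union_disjoint[symmetric] ivl_disj_int)
qed

lemma sum_atLeast1_atMost_split:
  fixes m k :: nat
  assumes "m \<le> k"
  shows "(\<Sum>i\<in>{1..k}. f i) = (\<Sum>i\<in>{1..m}. f i) + (\<Sum>i\<in>{m + 1..k}. f i :: 'a::comm_monoid_add)"
proof -
  have "{1..k} = {1..m} \<union> {m + 1..k}" using assms by auto
  thus ?thesis by (simp add: sum.union_disjoint[symmetric] ivl_disj_int)
qed

lemma prod_atLeast2_atMost_shift:
  fixes m :: nat
  shows "1 \<le> m \<Longrightarrow> (\<Prod>i\<in>{2..m}. f (i - 1)) = (\<Prod>i\<in>{1..m - 1}. f i :: 'a::comm_monoid_mult)"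
  using prod.shift_bounds_cl_Suc_ivl[of "\<lambda>i. f (i - 1)" 1 "m - 1"] by (simp add: numeral_2_eq_2)

locale Itilde_setting =
  fixes p s g l :: nat and z :: "nat \<Rightarrow> real"
  assumes odd_p: "odd p" and p_gt: "p > 2*g+1" and s_pos: "s \<ge> 1"
    and l_pos: "1 \<le> l" and l_le_g: "l \<le> g"
    and z_distinct: "\<forall>i\<in>{1..<2*g+1}. z i \<noteq> z (2*g+1)"
begin

definition "n = nn g"
definition "m = n - 2*l"
definition "M = MM p s"
definition "w i = z i - z n"
definition "B = Aset p s g"

lemma n_eq: "n = 2*g+1"
  by (simp add: n_def nn_def)

lemma m_pos: "m \<ge> 1" and m_plus: "m + 2*l = n" and m_less: "m < n - 1"
  using l_pos l_le_g by (auto simp: m_def n_eq)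

lemma p_power_eq: "p^s = 2*M + 1"
proof -
  have "odd (p^s)" using odd_p by simp
  then obtain k where "p^s = 2*k + 1" by (meson oddE)
  then show ?thesis unfolding M_def MM_def by simp
qed

lemma l_less_M: "M \<ge> l + 1"
proof -
  have "p \<ge> 2*g + 3"
  proof -
    obtain k where "p = 2*k + 1" using odd_p by (meson oddE)
    thus ?thesis using p_gt by presburger
  qed
  moreover have "p \<le> p^s" using power_increasing[of 1 s p] s_pos p_gt by simp
  ultimately show ?thesis using p_power_eq l_le_g by linarith
qed

lemma M_pos: "M \<ge> 1"
  using l_less_M by simp

lemma w_nonzero: "i \<in> {1..n - 1} \<Longrightarrow> w i \<noteq> 0"
  using z_distinct by (auto simp: w_def n_eq)

lemma w_m_nonzero: "w m \<noteq> 0"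
  using w_nonzero m_pos m_less by simp

lemma B_eq: "B = PiE {1..n - 1} (\<lambda>_. {0..M})"
  by (simp add: B_def Aset_def n_def M_def)

lemma finite_B: "finite B"
  by (simp add: B_eq finite_PiE)

lemma B_le_M: "a \<in> B \<Longrightarrow> i \<in> {1..n - 1} \<Longrightarrow> a i \<le> M"
  by (auto simp: B_eq PiE_def Pi_def)

definition "expo j i = (if i = j then M - 1 else M)"
definition "delta = m*M - l"
definition "wpow b = (\<Prod>i\<in>{1..n - 1}. w i ^ b i)"
definition "binom_expo j b = (\<Prod>i\<in>{1..n - 1}. real (expo j i choose b i))"
definition "expansion j = (\<Sum>b\<in>{b\<in>B. sum b {1..n - 1} = delta}. binom_expo j b * wpow b)"

lemma n_times_M: "n*M = m*M + 2*(l*M)"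
  by (simp add: m_plus[symmetric] algebra_simps)

lemma l_times_p_power: "l*p^s = 2*(l*M) + l"
  using p_power_eq by (simp add: algebra_simps)

lemma expo_le_lM: "expo j i \<le> l*M"
proof -
  have "expo j i \<le> M" by (simp add: expo_def)
  also have "M \<le> l*M" using l_pos mult_le_mono1[of 1 l M] by simp
  finally show ?thesis .
qed

lemma l_less_mM: "l + 1 \<le> m*M"
proof -
  have "M \<le> m*M" using m_pos mult_le_mono1[of 1 m M] by simp
  thus ?thesis using l_less_M by linarith
qed

lemma delta_eq: "int (n*M) - int (l*p^s) = int delta"
  using n_times_M p_power_eq l_less_mM by (simp add: delta_def algebra_simps)

lemma Phi_shift_div_eq:
  assumes j: "j \<in> {1..n}"
  shows "Phi_shift p s g z div [:z n - z j, 1:] = (\<Prod>i\<in>{1..n}. [:-w i, 1:] ^ expo j i)"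
proof -
  let ?rest = "\<Prod>i\<in>{1..n} - {j}. [:-w i, 1:] ^ M"
  have quotient: "(\<Prod>i\<in>{1..n}. [:-w i, 1:] ^ expo j i) = [:-w j, 1:] ^ (M - 1) * ?rest"
    using j by (simp add: prod.remove expo_def)
  have "Phi_shift p s g z = [:-w j, 1:] ^ M * ?rest"
    using j by (simp add: Phi_shift_def n_def M_def w_def prod.remove)
  also have "[:-w j, 1:] ^ M = [:-w j, 1:] * [:-w j, 1:] ^ (M - 1)"
    using M_pos by (cases M) auto
  finally have "Phi_shift p s g z = [:-w j, 1:] * (\<Prod>i\<in>{1..n}. [:-w i, 1:] ^ expo j i)"
    unfolding quotient by (simp only: mult.assoc)
  moreover have "[:z n - z j, 1:] = [:-w j, 1:]" by (simp add: w_def)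
  ultimately show ?thesis by (simp only:) (rule nonzero_mult_div_cancel_left, simp)
qed

lemma sum_expo:
  assumes "j \<in> {1..n}"
  shows "(\<Sum>i\<in>{1..n}. expo j i) + 1 = n*M"
proof -
  have "(\<Sum>i\<in>{1..n}. expo j i) = (M - 1) + (\<Sum>i\<in>{1..n} - {j}. expo j i)"
    using assms by (simp add: sum.remove expo_def)
  also have "(\<Sum>i\<in>{1..n} - {j}. expo j i) = (n - 1)*M"
    using assms by (simp add: expo_def)
  finally show ?thesis using M_pos n_eq by (simp add: algebra_simps)
qed

lemma degree_condition_iff:
  assumes j: "j \<in> {1..n}" and b: "b \<in> PiE {1..n - 1} (\<lambda>i. {0..expo j i})"
  shows "(\<Sum>i\<in>{1..n - 1}. expo j i - b i) = l*p^s - 1 - expo j n \<longleftrightarrow> sum b {1..n - 1} = delta"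
proof -
  have b_le: "\<forall>i\<in>{1..n - 1}. b i \<le> expo j i" using b by auto
  have "(\<Sum>i\<in>{1..n - 1}. expo j i - b i) = (\<Sum>i\<in>{1..n - 1}. expo j i) - sum b {1..n - 1}"
    using b_le by (intro sum_subtractf_nat) auto
  moreover have "sum b {1..n - 1} \<le> (\<Sum>i\<in>{1..n - 1}. expo j i)"
    using b_le by (intro sum_mono) auto
  moreover have "(\<Sum>i\<in>{1..n - 1}. expo j i) + expo j n + 1 = n*M"
    using sum_expo[OF j] sum_atLeast1_atMost_last[of n "expo j"] n_eq by simp
  ultimately show ?thesis
    using expo_le_lM[of j n] l_times_p_power n_times_M l_less_mM l_pos unfolding delta_def
    by linarith
qed

lemma Itilde_eq_sum:
  assumes j: "j \<in> {1..n}"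
  shows "Itilde p s g l z j = (-1)^delta *
    (\<Sum>b\<in>{b\<in>PiE {1..n - 1} (\<lambda>i. {0..expo j i}). sum b {1..n - 1} = delta}.
        \<Prod>i\<in>{1..n - 1}. real (expo j i choose b i) * w i ^ b i)"
proof -
  have "[:-w n, 1:] = monom 1 1" by (simp add: w_def monom_Suc)
  hence "[:-w n, 1:] ^ expo j n = monom 1 (expo j n)" by (simp add: monom_power)
  hence factor_n: "(\<Prod>i\<in>{1..n}. [:-w i, 1:] ^ expo j i)
      = monom 1 (expo j n) * (\<Prod>i\<in>{1..n - 1}. [:-w i, 1:] ^ expo j i)"
    using prod_atLeast1_atMost_last[of n] n_eq by (simp add: mult.commute)
  have "expo j n \<le> l*p^s - 1"
    using expo_le_lM[of j n] l_times_p_power by linarith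
  hence "Itilde p s g l z j = coeff (\<Prod>i\<in>{1..n - 1}. [:-w i, 1:] ^ expo j i) (l*p^s - 1 - expo j n)"
    unfolding Itilde_def n_def[symmetric] Phi_shift_div_eq[OF j] factor_n
    by (simp add: coeff_monom_mult)
  also have "\<dots> = (\<Sum>b\<in>{b\<in>PiE {1..n - 1} (\<lambda>i. {0..expo j i}). sum b {1..n - 1} = delta}.
        \<Prod>i\<in>{1..n - 1}. real (expo j i choose b i) * (-w i) ^ b i)"
    unfolding coeff_prod_linear_powers[OF finite_atLeastAtMost]
    by (intro sum.cong Collect_cong refl) (use degree_condition_iff[OF j] in blast)
  also have "\<dots> = (\<Sum>b\<in>{b\<in>PiE {1..n - 1} (\<lambda>i. {0..expo j i}). sum b {1..n - 1} = delta}.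
        (-1)^delta * (\<Prod>i\<in>{1..n - 1}. real (expo j i choose b i) * w i ^ b i))"
  proof (intro sum.cong refl)
    fix b assume "b \<in> {b\<in>PiE {1..n - 1} (\<lambda>i. {0..expo j i}). sum b {1..n - 1} = delta}"
    hence "delta = sum b {1..n - 1}" by simp
    have "(\<Prod>i\<in>{1..n - 1}. real (expo j i choose b i) * (-w i) ^ b i)
        = (\<Prod>i\<in>{1..n - 1}. (-1) ^ b i * (real (expo j i choose b i) * w i ^ b i))"
      by (intro prod.cong refl) (simp only: power_minus[of "w _"] mult_ac)
    also have "\<dots> = (-1)^delta * (\<Prod>i\<in>{1..n - 1}. real (expo j i choose b i) * w i ^ b i)"
      unfolding \<open>delta = sum b {1..n - 1}\<close> by (simp only: prod.distrib power_sum)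
    finally show "(\<Prod>i\<in>{1..n - 1}. real (expo j i choose b i) * (-w i) ^ b i)
        = (-1)^delta * (\<Prod>i\<in>{1..n - 1}. real (expo j i choose b i) * w i ^ b i)" .
  qed
  finally show ?thesis by (simp only: sum_distrib_left)
qed

lemma sum_expo_box_eq_sum_B:
  "(\<Sum>b\<in>{b\<in>PiE {1..n - 1} (\<lambda>i. {0..expo j i}). sum b {1..n - 1} = delta}.
        \<Prod>i\<in>{1..n - 1}. real (expo j i choose b i) * w i ^ b i)
   = (\<Sum>b\<in>{b\<in>B. sum b {1..n - 1} = delta}. \<Prod>i\<in>{1..n - 1}. real (expo j i choose b i) * w i ^ b i)"
proof (rule sum.mono_neutral_left)
  have "PiE {1..n - 1} (\<lambda>i. {0..expo j i}) \<subseteq> B"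
    unfolding B_eq by (rule PiE_mono) (auto simp: expo_def)
  thus "{b\<in>PiE {1..n - 1} (\<lambda>i. {0..expo j i}). sum b {1..n - 1} = delta} \<subseteq> {b\<in>B. sum b {1..n - 1} = delta}"
    by blast
next
  show "\<forall>b\<in>{b\<in>B. sum b {1..n - 1} = delta} - {b\<in>PiE {1..n - 1} (\<lambda>i. {0..expo j i}). sum b {1..n - 1} = delta}.
      (\<Prod>i\<in>{1..n - 1}. real (expo j i choose b i) * w i ^ b i) = 0"
  proof
    fix b assume "b \<in> {b\<in>B. sum b {1..n - 1} = delta} - {b\<in>PiE {1..n - 1} (\<lambda>i. {0..expo j i}). sum b {1..n - 1} = delta}"
    then obtain i where "i \<in> {1..n - 1}" "b i > expo j i"
      by (auto simp: B_eq PiE_def Pi_def)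
    thus "(\<Prod>i\<in>{1..n - 1}. real (expo j i choose b i) * w i ^ b i) = 0"
      by (intro prod_zero) auto
  qed
qed (simp add: finite_B)

lemma signed_Itilde_eq_expansion:
  assumes j: "j \<in> {1..n}"
  shows "(-1::real) powi (int (n*M) - int (l*p^s)) * w m ^ l * Itilde p s g l z j
     = w m ^ l * expansion j"
proof -
  have sign: "(-1::real) powi (int (n*M) - int (l*p^s)) * (-1)^delta = 1"
    unfolding delta_eq by (simp flip: power_mult_distrib)
  have "(-1::real) powi (int (n*M) - int (l*p^s)) * w m ^ l * Itilde p s g l z j
      = ((-1::real) powi (int (n*M) - int (l*p^s)) * (-1)^delta)
        * (w m ^ l * (\<Sum>b\<in>{b\<in>B. sum b {1..n - 1} = delta}.
                       \<Prod>i\<in>{1..n - 1}. real (expo j i choose b i) * w i ^ b i))"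
    unfolding Itilde_eq_sum[OF j] sum_expo_box_eq_sum_B by (simp only: mult_ac)
  thus ?thesis unfolding sign by (simp add: expansion_def binom_expo_def wpow_def prod.distrib)
qed

(* Values outside {1..n - 1} stay undefined so that flip maps B, a set of extensional
   functions, to itself. *)
definition "flip a = (\<lambda>i. if i \<in> {1..n - 1} then (if i \<le> m then M - a i else a i) else undefined)"

lemma flip_in_B: "a \<in> B \<Longrightarrow> flip a \<in> B"
  by (auto simp: B_eq flip_def PiE_def Pi_def extensional_def)

lemma flip_flip: "a \<in> B \<Longrightarrow> flip (flip a) = a"
  by (rule ext) (auto simp: B_eq flip_def PiE_def Pi_def extensional_def)

lemma binomial_flip: "b \<in> B \<Longrightarrow> i \<in> {1..n - 1} \<Longrightarrow> M choose flip b i = M choose b i"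
  by (auto simp: flip_def B_eq PiE_def Pi_def intro: binomial_symmetric[symmetric])

lemma sumcond_iff: "sumcond g l c a \<longleftrightarrow> (\<Sum>i\<in>{1..m}. a i) = (\<Sum>i\<in>{m + 1..n - 1}. a i) + c"
  by (simp add: sumcond_def m_def n_def)

lemma sumcond_iff_sum_flip:
  assumes a: "a \<in> B" and c: "c \<le> m*M"
  shows "sumcond g l c a \<longleftrightarrow> sum (flip a) {1..n - 1} = m*M - c"
proof -
  have a_le: "i \<in> {1..n - 1} \<Longrightarrow> a i \<le> M" for i using B_le_M[OF a] .
  have mn: "m \<le> n - 1" using m_less by simp
  have "sum (flip a) {1..n - 1} = (\<Sum>i\<in>{1..m}. M - a i) + (\<Sum>i\<in>{m + 1..n - 1}. a i)"
    unfolding sum_atLeast1_atMost_split[OF mn] using mn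
    by (intro arg_cong2[where f="(+)"] sum.cong refl) (auto simp: flip_def)
  moreover have "(\<Sum>i\<in>{1..m}. M - a i) = m*M - (\<Sum>i\<in>{1..m}. a i)"
    using a_le mn by (subst sum_subtractf_nat) auto
  moreover have "(\<Sum>i\<in>{1..m}. a i) \<le> (\<Sum>i\<in>{1..m}. M)"
    using a_le mn by (intro sum_mono) auto
  ultimately show ?thesis using c unfolding sumcond_iff by simp linarith
qed

lemma sum_sumcond_eq_sum_flip:
  assumes c: "c \<le> m*M"
  shows "(\<Sum>a\<in>{a\<in>B. sumcond g l c a}. f a) = (\<Sum>b\<in>{b\<in>B. sum b {1..n - 1} = m*M - c}. f (flip b))"
proof (rule sum.reindex_bij_witness[where i=flip and j=flip])
  fix a assume "a \<in> {a\<in>B. sumcond g l c a}"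
  thus "flip (flip a) = a" "f (flip (flip a)) = f a" "flip a \<in> {b\<in>B. sum b {1..n - 1} = m*M - c}"
    using flip_flip flip_in_B sumcond_iff_sum_flip[OF _ c] by auto
next
  fix b assume b: "b \<in> {b\<in>B. sum b {1..n - 1} = m*M - c}"
  thus "flip (flip b) = b" using flip_flip by auto
  show "flip b \<in> {a\<in>B. sumcond g l c a}"
    using b flip_in_B flip_flip sumcond_iff_sum_flip[OF flip_in_B c] by auto
qed

lemma x1_eq: "x1 g l z = (\<Prod>i\<in>{1..m}. w i)"
  by (simp add: x1_def m_def n_def w_def)

lemma xs_lower: "2 \<le> i \<Longrightarrow> i \<le> m \<Longrightarrow> xs g l z i = w m / w (i - 1)"
  by (simp add: xs_def m_def n_def w_def)

lemma xs_upper: "m < i \<Longrightarrow> xs g l z i = w i / w m"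
  by (simp add: xs_def m_def n_def w_def)

lemma Xmon_eq:
  "Xmon g l a (xs g l z) = (\<Prod>i\<in>{1..m - 1}. (w m / w i) ^ a i) * (\<Prod>i\<in>{m + 1..n - 1}. (w i / w m) ^ a i)"
proof -
  have "(\<Prod>i\<in>{2..m}. xs g l z i ^ a (i - 1)) = (\<Prod>i\<in>{2..m}. (\<lambda>k. (w m / w k) ^ a k) (i - 1))"
    by (intro prod.cong refl) (simp add: xs_lower)
  also have "\<dots> = (\<Prod>i\<in>{1..m - 1}. (w m / w i) ^ a i)"
    by (rule prod_atLeast2_atMost_shift[OF m_pos])
  finally show ?thesis
    unfolding Xmon_def using xs_upper by (simp add: m_def[symmetric] n_def[symmetric])
qed

lemma x1_power_times_Xmon:
  assumes a: "a \<in> B" and sc: "sumcond g l c a"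
  shows "x1 g l z ^ M * Xmon g l a (xs g l z) = w m ^ c * wpow (flip a)"
proof -
  have mn: "m \<le> n - 1" using m_less by simp
  have w_lower: "i \<in> {1..m - 1} \<Longrightarrow> w i \<noteq> 0" for i by (intro w_nonzero) (use m_less in auto)
  define W where "W = w m"
  define A where "A = (\<Prod>i\<in>{1..m - 1}. w i ^ M)"
  define D where "D = (\<Prod>i\<in>{1..m - 1}. w i ^ a i)"
  define C where "C = (\<Prod>i\<in>{m + 1..n - 1}. w i ^ a i)"
  define S1 where "S1 = (\<Sum>i\<in>{1..m - 1}. a i)"
  define S2 where "S2 = (\<Sum>i\<in>{m + 1..n - 1}. a i)"
  have W_nonzero: "W \<noteq> 0" unfolding W_def by (rule w_m_nonzero)
  have "S1 + a m = S2 + c"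
    using sc sum_atLeast1_atMost_last[OF m_pos, of a] by (simp add: sumcond_iff S1_def S2_def)
  moreover have "a m \<le> M" using B_le_M[OF a] m_pos m_less by simp
  ultimately have "M + S1 = c + (M - a m) + S2" by linarith
  hence exponents: "W ^ M * W ^ S1 = W ^ c * W ^ (M - a m) * W ^ S2"
    by (simp only: power_add[symmetric])
  have "x1 g l z ^ M * Xmon g l a (xs g l z) = A * W ^ M * (W ^ S1 / D * (C / W ^ S2))"
    unfolding Xmon_eq x1_eq prod_atLeast1_atMost_last[OF m_pos]
    by (simp add: A_def W_def D_def C_def S1_def S2_def power_mult_distrib prod_power_distrib
        power_divide prod_dividef power_sum)
  also have "\<dots> = A * C * (W ^ M * W ^ S1) / (D * W ^ S2)"
    by (simp add: field_simps)
  also have "\<dots> = A * C * (W ^ c * W ^ (M - a m)) / D"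
    unfolding exponents using W_nonzero by (simp add: field_simps)
  also have "\<dots> = W ^ c * (A / D * W ^ (M - a m) * C)"
    by (simp add: field_simps)
  also have "A / D = (\<Prod>i\<in>{1..m - 1}. w i ^ (M - a i))"
  proof -
    have "w i ^ (M - a i) = w i ^ M / w i ^ a i" if i: "i \<in> {1..m - 1}" for i
    proof -
      have "a i \<le> M" by (intro B_le_M[OF a]) (use i m_less in auto)
      thus ?thesis by (rule power_diff[OF w_lower[OF i]])
    qed
    thus ?thesis by (simp add: prod_dividef A_def D_def)
  qed
  also have "(\<Prod>i\<in>{1..m - 1}. w i ^ (M - a i)) * W ^ (M - a m) * C = wpow (flip a)"
    unfolding wpow_def prod_atLeast1_atMost_split[OF mn] prod_atLeast1_atMost_last[OF m_pos]
      C_def W_def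
    using mn m_pos by (intro arg_cong2[where f="(*)"] prod.cong refl) (auto simp: flip_def)
  finally show ?thesis by (simp add: W_def)
qed

lemma Q_lower:
  "1 \<le> j \<Longrightarrow> j < m \<Longrightarrow>
    Q p s g l j x = x (j + 1) * (\<Sum>a\<in>{a\<in>B. sumcond g l (l - 1) a}. wt p s g j a * Xmon g l a x)"
  by (simp add: Q_def B_def m_def n_def)

lemma Q_at_m: "Q p s g l m x = (\<Sum>a\<in>{a\<in>B. sumcond g l (l - 1) a}. wt p s g m a * Xmon g l a x)"
  using m_pos by (simp add: Q_def B_def m_def n_def)

lemma Q_upper:
  "m < j \<Longrightarrow> j \<le> n - 1 \<Longrightarrow>
    Q p s g l j x = (\<Sum>a\<in>{a\<in>B. sumcond g l l a}. wt p s g j a * Xmon g l a x)"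
  by (simp add: Q_def B_def m_def n_def)

lemma Q_at_n: "Q p s g l n x = (\<Sum>a\<in>{a\<in>B. sumcond g l l a}. wtn p s g a * Xmon g l a x)"
  using m_less by (simp add: Q_def B_def m_def n_def)

definition "binom_rest j b = (\<Prod>i\<in>{1..n - 1} - {j}. real (M choose b i))"

lemma wt_eq: "wt p s g j a = real ((M - 1) choose a j) * binom_rest j a"
  by (simp add: wt_def binom_rest_def M_def n_def)

lemma binom_expo_eq:
  "j \<in> {1..n - 1} \<Longrightarrow> binom_expo j b = real ((M - 1) choose b j) * binom_rest j b"
  by (simp add: binom_expo_def binom_rest_def prod.remove expo_def)

lemma binom_rest_flip: "b \<in> B \<Longrightarrow> binom_rest j (flip b) = binom_rest j b"
  unfolding binom_rest_def by (intro prod.cong refl) (simp add: binomial_flip)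

lemma wt_flip_upper:
  assumes b: "b \<in> B" and j: "m < j" "j \<le> n - 1"
  shows "wt p s g j (flip b) = binom_expo j b"
proof -
  have "j \<in> {1..n - 1}" using j m_pos by auto
  moreover from this have "flip b j = b j" using j by (simp add: flip_def)
  ultimately show ?thesis by (simp add: wt_eq binom_rest_flip[OF b] binom_expo_eq)
qed

lemma wtn_flip: "b \<in> B \<Longrightarrow> wtn p s g (flip b) = binom_expo n b"
  unfolding wtn_def binom_expo_def M_def[symmetric] n_def[symmetric]
  by (intro prod.cong refl) (auto simp: binomial_flip expo_def)

lemma x1_power_times_Q_upper:
  assumes j: "m < j" "j \<le> n"
  shows "x1 g l z ^ M * Q p s g l j (xs g l z) = w m ^ l * expansion j"
proof -
  define v where "v a = (if j \<le> n - 1 then wt p s g j a else wtn p s g a)" for a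
  have j_cases: "j \<le> n - 1 \<or> j = n" using j by linarith
  have Q: "Q p s g l j (xs g l z) = (\<Sum>a\<in>{a\<in>B. sumcond g l l a}. v a * Xmon g l a (xs g l z))"
    using j_cases Q_upper[OF j(1)] Q_at_n n_eq by (auto simp: v_def)
  have v_flip: "v (flip b) = binom_expo j b" if "b \<in> B" for b
    using j_cases wt_flip_upper[OF that j(1)] wtn_flip[OF that] n_eq by (auto simp: v_def)
  have "x1 g l z ^ M * Q p s g l j (xs g l z) = (\<Sum>a\<in>{a\<in>B. sumcond g l l a}. v a * (w m ^ l * wpow (flip a)))"
    unfolding Q sum_distrib_left
    by (intro sum.cong refl) (simp add: x1_power_times_Xmon[symmetric] mult_ac)
  also have "\<dots> = (\<Sum>b\<in>{b\<in>B. sum b {1..n - 1} = delta}. v (flip b) * (w m ^ l * wpow (flip (flip b))))"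
    unfolding delta_def using l_less_mM by (intro sum_sumcond_eq_sum_flip) simp
  also have "\<dots> = w m ^ l * expansion j"
    unfolding expansion_def sum_distrib_left
    by (intro sum.cong refl) (simp add: v_flip flip_flip)
  finally show ?thesis .
qed

lemma binom_rest_fun_upd: "binom_rest j (b(j := x)) = binom_rest j b"
  unfolding binom_rest_def by (intro prod.cong refl) auto

lemma wpow_fun_upd_Suc:
  assumes j: "j \<in> {1..n - 1}"
  shows "wpow (b(j := Suc (b j))) = w j * wpow b"
proof -
  have "(\<Prod>i\<in>{1..n - 1} - {j}. w i ^ (b(j := Suc (b j))) i) = (\<Prod>i\<in>{1..n - 1} - {j}. w i ^ b i)"
    by (intro prod.cong refl) auto
  thus ?thesis using j unfolding wpow_def by (simp add: prod.remove)
qed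

(* For j <= m the extra factor x_(j+1) = w_m / w_j of Q_j is absorbed by lowering b_j by one. *)
lemma sum_shift_exponent:
  assumes j: "j \<in> {1..n - 1}"
  shows "(\<Sum>b\<in>{b\<in>B. sum b {1..n - 1} = delta + 1}. real ((M - 1) choose (M - b j)) * binom_rest j b * wpow b)
       = w j * expansion j"
proof -
  define raise where "raise b = b(j := Suc (b j))" for b :: "nat \<Rightarrow> nat"
  define lower where "lower b = b(j := b j - 1)" for b :: "nat \<Rightarrow> nat"
  define S1 where "S1 = {b\<in>B. sum b {1..n - 1} = delta + 1 \<and> 1 \<le> b j}"
  define S2 where "S2 = {b\<in>B. sum b {1..n - 1} = delta \<and> b j < M}"
  have "(\<Sum>b\<in>{b\<in>B. sum b {1..n - 1} = delta + 1}. real ((M - 1) choose (M - b j)) * binom_rest j b * wpow b)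
      = (\<Sum>b\<in>S1. real ((M - 1) choose (M - b j)) * binom_rest j b * wpow b)"
    unfolding S1_def using M_pos by (intro sum.mono_neutral_right) (auto simp: finite_B)
  also have "\<dots> = (\<Sum>b\<in>S2. w j * (real ((M - 1) choose b j) * binom_rest j b * wpow b))"
  proof (rule sum.reindex_bij_witness[where i=raise and j=lower])
    fix b assume "b \<in> S2"
    thus "lower (raise b) = b" "raise b \<in> S1"
      using j sum_fun_upd_Suc[OF finite_atLeastAtMost j, of b]
      by (auto simp: S1_def S2_def raise_def lower_def B_eq PiE_def Pi_def extensional_def)
  next
    fix a assume a: "a \<in> S1"
    hence a_B: "a \<in> B" and a_pos: "1 \<le> a j" by (auto simp: S1_def)
    show raise_lower: "raise (lower a) = a" using a_pos by (auto simp: raise_def lower_def)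
    hence "sum a {1..n - 1} = Suc (sum (lower a) {1..n - 1})"
      using sum_fun_upd_Suc[OF finite_atLeastAtMost j, of "lower a"] by (simp add: raise_def)
    thus lower_S2: "lower a \<in> S2"
      using a j B_le_M[OF a_B j] by (auto simp: S1_def S2_def lower_def B_eq PiE_def Pi_def extensional_def)
    have "lower a j \<le> M - 1" "M - 1 - lower a j = M - a j"
      using lower_S2 a_pos by (auto simp: S2_def lower_def)
    hence "(M - 1) choose (M - a j) = (M - 1) choose (lower a j)"
      using binomial_symmetric[of "lower a j" "M - 1"] by simp
    moreover have "a = (lower a)(j := Suc (lower a j))"
      using raise_lower by (simp add: raise_def)
    hence "wpow a = w j * wpow (lower a)" "binom_rest j a = binom_rest j (lower a)"
      using wpow_fun_upd_Suc[OF j] binom_rest_fun_upd by metis+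
    ultimately show "w j * (real ((M - 1) choose lower a j) * binom_rest j (lower a) * wpow (lower a))
        = real ((M - 1) choose (M - a j)) * binom_rest j a * wpow a"
      by simp
  qed
  also have "\<dots> = w j * (\<Sum>b\<in>{b\<in>B. sum b {1..n - 1} = delta}. real ((M - 1) choose b j) * binom_rest j b * wpow b)"
    unfolding S2_def sum_distrib_left[symmetric]
    using B_le_M[OF _ j] M_pos by (intro arg_cong[where f="(*) (w j)"] sum.mono_neutral_left)
      (auto simp: finite_B le_less)
  finally show ?thesis by (simp add: expansion_def binom_expo_eq[OF j])
qed

lemma wt_flip_lower:
  assumes b: "b \<in> B" and j: "1 \<le> j" "j \<le> m"
  shows "wt p s g j (flip b) = real ((M - 1) choose (M - b j)) * binom_rest j b"
proof -
  have "flip b j = M - b j" using j m_less by (simp add: flip_def)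
  thus ?thesis by (simp add: wt_eq binom_rest_flip[OF b])
qed

lemma x1_power_times_Q_lower:
  assumes j: "1 \<le> j" "j \<le> m"
  shows "x1 g l z ^ M * Q p s g l j (xs g l z) = w m ^ l * expansion j"
proof -
  have j1: "j \<in> {1..n - 1}" using j m_less by auto
  define f where "f = (if j < m then xs g l z (j + 1) else 1)"
  have j_cases: "j < m \<or> j = m" using j by linarith
  have Q: "Q p s g l j (xs g l z)
      = f * (\<Sum>a\<in>{a\<in>B. sumcond g l (l - 1) a}. wt p s g j a * Xmon g l a (xs g l z))"
    using j_cases Q_lower[OF j(1)] Q_at_m by (auto simp: f_def)
  have f_w: "f * w j = w m"
    using j_cases xs_lower[of "j + 1"] j w_nonzero[OF j1] by (auto simp: f_def)
  have "x1 g l z ^ M * Q p s g l j (xs g l z)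
      = f * w m ^ (l - 1) * (\<Sum>a\<in>{a\<in>B. sumcond g l (l - 1) a}. wt p s g j a * wpow (flip a))"
    unfolding Q sum_distrib_left
  proof (intro sum.cong refl)
    fix a assume "a \<in> {a\<in>B. sumcond g l (l - 1) a}"
    hence "x1 g l z ^ M * Xmon g l a (xs g l z) = w m ^ (l - 1) * wpow (flip a)"
      using x1_power_times_Xmon by blast
    thus "x1 g l z ^ M * (f * (wt p s g j a * Xmon g l a (xs g l z)))
        = f * w m ^ (l - 1) * (wt p s g j a * wpow (flip a))"
      by (simp add: mult_ac)
  qed
  also have "(\<Sum>a\<in>{a\<in>B. sumcond g l (l - 1) a}. wt p s g j a * wpow (flip a))
      = (\<Sum>b\<in>{b\<in>B. sum b {1..n - 1} = m*M - (l - 1)}. wt p s g j (flip b) * wpow (flip (flip b)))"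
    using l_less_mM by (intro sum_sumcond_eq_sum_flip) simp
  also have "\<dots> = (\<Sum>b\<in>{b\<in>B. sum b {1..n - 1} = delta + 1}. wt p s g j (flip b) * wpow b)"
    using l_less_mM l_pos by (intro sum.cong) (auto simp: delta_def flip_flip)
  also have "\<dots> = w j * expansion j"
    unfolding sum_shift_exponent[OF j1, symmetric]
    by (intro sum.cong refl) (simp add: wt_flip_lower[OF _ j])
  also have "f * w m ^ (l - 1) * (w j * expansion j) = w m ^ l * expansion j"
    using f_w l_pos by (simp add: power_eq_if mult_ac)
  finally show ?thesis .
qed

lemma Itilde_eq_Q:
  assumes j: "j \<in> {1..n}"
  shows "(-1::real) powi (int (n*M) - int (l*p^s)) * w m ^ l * Itilde p s g l z j
     = x1 g l z ^ M * Q p s g l j (xs g l z)"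
proof -
  have "x1 g l z ^ M * Q p s g l j (xs g l z) = w m ^ l * expansion j"
    using x1_power_times_Q_lower x1_power_times_Q_upper j by (cases "j \<le> m") auto
  thus ?thesis unfolding signed_Itilde_eq_expansion[OF j] ..
qed

definition "a_single c = (\<lambda>i. if i \<in> {1..n - 1} then (if i = m then c else 0) else undefined)"

lemma Xmon_at_zero: "Xmon g l a (\<lambda>_. 0) = (if \<forall>i\<in>{1..n - 1} - {m}. a i = 0 then 1 else 0)"
proof -
  have "Xmon g l a (\<lambda>_. 0) = (\<Prod>i\<in>{1..m - 1}. (0::real) ^ a i) * (\<Prod>i\<in>{m + 1..n - 1}. (0::real) ^ a i)"
    unfolding Xmon_def m_def[symmetric] n_def[symmetric]
    using prod_atLeast2_atMost_shift[OF m_pos, of "\<lambda>i. (0::real) ^ a i"] by simp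
  also have "\<dots> = (if \<forall>i\<in>{1..m - 1} \<union> {m + 1..n - 1}. a i = 0 then 1 else 0)"
    by (auto simp: prod_zero_power)
  also have "{1..m - 1} \<union> {m + 1..n - 1} = {1..n - 1} - {m}"
    using m_pos m_less by auto
  finally show ?thesis .
qed

lemma a_single_unique:
  assumes a: "a \<in> B" "sumcond g l c a" and vanish: "\<forall>i\<in>{1..n - 1} - {m}. a i = 0"
  shows "a = a_single c"
proof -
  have "\<forall>i\<in>{1..m - 1}. a i = 0"
  proof
    fix i assume "i \<in> {1..m - 1}"
    hence "i \<in> {1..n - 1} - {m}" using m_less by auto
    thus "a i = 0" using vanish by blast
  qed
  hence "(\<Sum>i\<in>{1..m}. a i) = a m"
    unfolding sum_atLeast1_atMost_last[OF m_pos] by simp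
  moreover have "(\<Sum>i\<in>{m + 1..n - 1}. a i) = 0" using vanish by (intro sum.neutral) auto
  ultimately have "a m = c" using a(2) by (simp add: sumcond_iff)
  thus ?thesis using vanish a(1) by (auto simp: a_single_def B_eq PiE_def extensional_def)
qed

lemma a_single_mem:
  assumes "c \<le> M"
  shows "a_single c \<in> {a\<in>B. sumcond g l c a}"
proof -
  have "a_single c \<in> B" using assms by (auto simp: a_single_def B_eq PiE_def Pi_def extensional_def)
  moreover have "(\<Sum>i\<in>{1..m}. a_single c i) = c"
    unfolding sum_atLeast1_atMost_last[OF m_pos] using m_pos m_less
    by (subst sum.neutral) (auto simp: a_single_def)
  moreover have "(\<Sum>i\<in>{m + 1..n - 1}. a_single c i) = 0" by (simp add: a_single_def)
  ultimately show ?thesis by (simp add: sumcond_iff)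
qed

lemma sum_Xmon_at_zero:
  assumes "c \<le> M"
  shows "(\<Sum>a\<in>{a\<in>B. sumcond g l c a}. v a * Xmon g l a (\<lambda>_. 0)) = v (a_single c)"
proof -
  have "(\<Sum>a\<in>{a\<in>B. sumcond g l c a}. v a * Xmon g l a (\<lambda>_. 0))
      = (\<Sum>a\<in>{a\<in>B. sumcond g l c a}. if a = a_single c then v (a_single c) else 0)"
    using a_single_unique by (intro sum.cong refl) (auto simp: Xmon_at_zero a_single_def)
  also have "\<dots> = v (a_single c)"
    using a_single_mem[OF assms] finite_B by (simp add: sum.delta')
  finally show ?thesis .
qed

lemma prod_binomial_a_single:
  assumes "j \<noteq> m"
  shows "(\<Prod>i\<in>{1..n - 1} - {j}. real (M choose a_single c i)) = real (M choose c)"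
proof -
  have m_in: "m \<in> {1..n - 1} - {j}" using m_pos m_less assms by auto
  have "(\<Prod>i\<in>{1..n - 1} - {j}. real (M choose a_single c i))
      = real (M choose a_single c m) * (\<Prod>i\<in>{1..n - 1} - {j} - {m}. real (M choose a_single c i))"
    by (rule prod.remove[OF _ m_in]) simp
  also have "(\<Prod>i\<in>{1..n - 1} - {j} - {m}. real (M choose a_single c i)) = 1"
    by (intro prod.neutral) (auto simp: a_single_def)
  finally show ?thesis using m_in by (simp add: a_single_def)
qed

lemma Q_at_zero:
  assumes j: "j \<in> {1..n}"
  shows "Q p s g l j (\<lambda>_. 0) = real (M choose l) * cvec p s g l j"
proof -
  have cvec_eq: "cvec p s g l j = (if j < m then 0 else if j = m then real l / real M else 1)"
    using m_plus n_eq m_pos by (auto simp: cvec_def M_def)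
  have l_le: "l \<le> M" "l - 1 \<le> M" using l_less_M by auto
  consider "j < m" | "j = m" | "m < j" "j \<le> n - 1" | "j = n" using j by force
  thus ?thesis
  proof cases
    case 1
    thus ?thesis using Q_lower[of j] j cvec_eq by simp
  next
    case 2
    have "Q p s g l j (\<lambda>_. 0) = wt p s g m (a_single (l - 1))"
      using 2 Q_at_m sum_Xmon_at_zero[OF l_le(2)] by simp
    also have "\<dots> = real ((M - 1) choose (l - 1))"
      using m_pos m_less by (simp add: wt_eq binom_rest_def a_single_def)
    also have "\<dots> = real (M choose l) * (real l / real M)"
      using l_pos M_pos by (rule real_binomial_absorption)
    finally show ?thesis using cvec_eq 2 by simp
  next
    case 3
    hence "Q p s g l j (\<lambda>_. 0) = wt p s g j (a_single l)"
      using Q_upper sum_Xmon_at_zero[OF l_le(1)] by simp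
    also have "\<dots> = real (M choose l)"
      using 3 prod_binomial_a_single[of j l] by (simp add: wt_eq binom_rest_def a_single_def)
    finally have "Q p s g l j (\<lambda>_. 0) = real (M choose l)" .
    thus ?thesis using cvec_eq 3 by simp
  next
    case 4
    have "{1..n - 1} - {n} = {1..n - 1}" by auto
    hence "wtn p s g (a_single l) = real (M choose l)"
      using m_less prod_binomial_a_single[of n l]
      by (simp add: wtn_def M_def[symmetric] n_def[symmetric])
    hence "Q p s g l j (\<lambda>_. 0) = real (M choose l)"
      using 4 Q_at_n sum_Xmon_at_zero[OF l_le(1)] by simp
    moreover have "\<not> n < m" "n \<noteq> m" using m_less by auto
    ultimately show ?thesis using cvec_eq 4 by simp
  qed
qed

end

theorem theorem9p3:
  fixes p s g l :: nat and z :: "nat \<Rightarrow> real"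
  assumes "prime p" and "odd p" and "g \<ge> 1" and "p > 2*g+1"
    and "s \<ge> 1" and "1 \<le> l" and "l \<le> g"
    and "\<forall>i\<in>{1..<2*g+1}. z i \<noteq> z (2*g+1)"
  shows "(\<forall>j\<in>{1..2*g+1}.
           (-1::real) powi (int ((2*g+1) * MM p s) - int (l * p^s))
             * (z (2*g+1 - 2*l) - z (2*g+1)) ^ l * Itilde p s g l z j
           = x1 g l z ^ MM p s * Q p s g l j (xs g l z))
       \<and> (\<forall>j\<in>{1..2*g+1}.
           Q p s g l j (\<lambda>_. 0) = real (MM p s choose l) * cvec p s g l j)"
proof -
  interpret Itilde_setting p s g l z
    using assms(2,4-8) by unfold_locales
  have "w m = z (2*g+1 - 2*l) - z (2*g+1)"
    by (simp add: w_def m_def n_eq)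
  thus ?thesis
    using Itilde_eq_Q Q_at_zero unfolding n_eq M_def by simp
qed

end
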